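(* Let $Q(u,v)\in\mathbb{Z}[u,v]$ be a quadratic form and let $r\in\mathbb{N}$. Then there are lattices $\Lambda_1,\ldots,\Lambda_N\subseteq\mathbb{Z}^2$ with $N\le 2^{\Omega(r)}$ such that $Q(u,v)\equiv 0\pmod r$ holds for $(u,v)\in\mathbb{Z}^2$ if and only if $(u,v)\in\bigcup_{n=1}^N\Lambda_n$.
   Context: $\Omega(r)$ denotes the number of prime factors of $r$ counted with multiplicity. *)

theory Defs
  imports "HOL-Computational_Algebra.Primes" "HOL-Number_Theory.Cong"
begin

definition bigOmega :: "nat \<Rightarrow> nat" where
  "bigOmega r = size (prime_factorization r)"

text \<open>A lattice in Z^2: an additive subgroup of Z^2 of full rank (finite index).\<close>
definition int_lattice :: "(int \<times> int) set \<Rightarrow> bool" where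
  "int_lattice L \<longleftrightarrow>
     (0, 0) \<in> L \<and>
     (\<forall>x\<in>L. \<forall>y\<in>L. (fst x + fst y, snd x + snd y) \<in> L) \<and>
     (\<forall>x\<in>L. (- fst x, - snd x) \<in> L) \<and>
     (\<exists>m::int. m > 0 \<and> (\<forall>u v. (m * u, m * v) \<in> L))"

end

theory Submission
  imports Defs
begin

text \<open>Induction on \<open>\<Omega>(r)\<close>. Write \<open>r = p s\<close> with \<open>p\<close> prime. Unless \<open>Q\<close> vanishes identically
  mod \<open>p\<close>, it has at most two zeros on the projective line over \<open>\<int>/p\<close>, and every zero of \<open>Q\<close>
  mod \<open>p\<close> lies in \<open>p\<int>\<^sup>2\<close> or reduces to one of them. The points reducing to a given
  projective point, as well as \<open>p\<int>\<^sup>2\<close>, form a lattice \<open>M \<int>\<^sup>2\<close> with \<open>Q \<circ> M = p Q\<^sub>M\<close> for an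
  integral form \<open>Q\<^sub>M\<close>, so at most two such lattices cover the zeros of \<open>Q\<close> mod \<open>p\<close>. On
  \<open>M \<int>\<^sup>2\<close> we have \<open>r | Q(M w)\<close> iff \<open>s | Q\<^sub>M(w)\<close>, and the induction hypothesis for \<open>Q\<^sub>M\<close>, transported
  by the nonsingular map \<open>M\<close>, contributes at most \<open>2\<^bsup>\<Omega>(s)\<^esup>\<close> lattices for each \<open>M\<close>.\<close>

type_synonym form = "int \<times> int \<times> int"
type_synonym mat = "int \<times> int \<times> int \<times> int"

fun form_eval :: "form \<Rightarrow> int \<times> int \<Rightarrow> int" where
  "form_eval (a, b, c) (u, v) = a * u\<^sup>2 + b * u * v + c * v\<^sup>2"

fun form_scale :: "int \<Rightarrow> form \<Rightarrow> form" where
  "form_scale k (a, b, c) = (k * a, k * b, k * c)"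

fun mat_apply :: "mat \<Rightarrow> int \<times> int \<Rightarrow> int \<times> int" where
  "mat_apply (\<alpha>, \<beta>, \<gamma>, \<delta>) (x, y) = (\<alpha> * x + \<beta> * y, \<gamma> * x + \<delta> * y)"

fun mat_det :: "mat \<Rightarrow> int" where
  "mat_det (\<alpha>, \<beta>, \<gamma>, \<delta>) = \<alpha> * \<delta> - \<beta> * \<gamma>"

fun form_compose :: "form \<Rightarrow> mat \<Rightarrow> form" where
  "form_compose (a, b, c) (\<alpha>, \<beta>, \<gamma>, \<delta>) =
     (a * \<alpha>\<^sup>2 + b * \<alpha> * \<gamma> + c * \<gamma>\<^sup>2,
      2 * a * \<alpha> * \<beta> + b * (\<alpha> * \<delta> + \<beta> * \<gamma>) + 2 * c * \<gamma> * \<delta>,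
      a * \<beta>\<^sup>2 + b * \<beta> * \<delta> + c * \<delta>\<^sup>2)"

definition zeros_mod :: "form \<Rightarrow> int \<Rightarrow> (int \<times> int) set" where
  "zeros_mod F m = {z. m dvd form_eval F z}"

lemma form_eval_compose: "form_eval (form_compose F M) z = form_eval F (mat_apply M z)"
  by (cases F; cases M; cases z) (simp add: power2_eq_square algebra_simps)

lemma form_eval_scale: "form_eval (form_scale k F) z = k * form_eval F z"
  by (cases F; cases z) (simp add: algebra_simps)

lemma form_eval_homogeneous: "form_eval F (k * x, k * y) = k\<^sup>2 * form_eval F (x, y)"
  by (cases F) (simp add: power2_eq_square algebra_simps)

lemma form_eval_diff:
  "form_eval (a, b, c) (u, v) - form_eval (a, b, c) (u', v) = (u - u') * (a * (u + u') + b * v)"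
  by (simp add: power2_eq_square algebra_simps)

lemma int_lattice_UNIV: "int_lattice UNIV"
  unfolding int_lattice_def by (auto intro: exI[of _ 1])

lemma int_lattice_mat_image:
  assumes L: "int_lattice L" and det: "mat_det M \<noteq> 0"
  shows "int_lattice (mat_apply M ` L)"
proof -
  obtain \<alpha> \<beta> \<gamma> \<delta> where M: "M = (\<alpha>, \<beta>, \<gamma>, \<delta>)" by (cases M)
  define d where "d = \<alpha> * \<delta> - \<beta> * \<gamma>"
  from L obtain m where "m > 0" and m: "\<And>u v. (m * u, m * v) \<in> L"
    unfolding int_lattice_def by blast
  have "(0, 0) \<in> mat_apply M ` L"
    using L unfolding int_lattice_def M by (auto intro!: image_eqI[of _ _ "(0, 0)"])
  moreover have "(fst z + fst w, snd z + snd w) \<in> mat_apply M ` L"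
    if "z \<in> mat_apply M ` L" "w \<in> mat_apply M ` L" for z w
  proof -
    from that obtain x1 x2 y1 y2 where "(x1, x2) \<in> L" "(y1, y2) \<in> L"
      and "z = mat_apply M (x1, x2)" "w = mat_apply M (y1, y2)" by auto
    moreover have "(x1 + y1, x2 + y2) \<in> L" using L calculation(1,2) unfolding int_lattice_def by force
    ultimately show ?thesis
      unfolding M by (auto simp: algebra_simps intro!: image_eqI[of _ _ "(x1 + y1, x2 + y2)"])
  qed
  moreover have "(- fst z, - snd z) \<in> mat_apply M ` L" if "z \<in> mat_apply M ` L" for z
  proof -
    from that obtain x1 x2 where "(x1, x2) \<in> L" and "z = mat_apply M (x1, x2)" by auto
    moreover have "(- x1, - x2) \<in> L" using L calculation(1) unfolding int_lattice_def by force
    ultimately show ?thesis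
      unfolding M by (auto simp: algebra_simps intro!: image_eqI[of _ _ "(- x1, - x2)"])
  qed
  moreover have "(m * d\<^sup>2 * u, m * d\<^sup>2 * v) \<in> mat_apply M ` L" for u v
  proof
    \<comment> \<open>the adjugate of \<open>M\<close> inverts \<open>M\<close> up to the factor \<open>d\<close>\<close>
    show "(m * d\<^sup>2 * u, m * d\<^sup>2 * v) = mat_apply M (m * (d * (\<delta> * u - \<beta> * v)), m * (d * (\<alpha> * v - \<gamma> * u)))"
      by (simp add: M d_def power2_eq_square algebra_simps)
  qed (rule m)
  moreover have "m * d\<^sup>2 > 0"
    using \<open>m > 0\<close> det by (simp add: M d_def)
  ultimately show ?thesis
    unfolding int_lattice_def by blast
qed

lemma range_mat_apply_root: "range (mat_apply (t, p, 1, 0)) = {(u, v). p dvd u - t * v}"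
proof (intro set_eqI iffI)
  fix z :: "int \<times> int" assume "z \<in> {(u, v). p dvd u - t * v}"
  then obtain u v y where "z = (u, v)" "u - t * v = p * y" by (auto elim!: dvdE)
  then show "z \<in> range (mat_apply (t, p, 1, 0))"
    by (auto simp: algebra_simps intro!: image_eqI[of _ _ "(v, y)"])
qed auto

lemma range_mat_apply_infinity: "range (mat_apply (1, 0, 0, p)) = {(u, v). p dvd v}"
proof (intro set_eqI iffI)
  fix z :: "int \<times> int" assume "z \<in> {(u, v). p dvd v}"
  then obtain u y where "z = (u, p * y)" by (auto elim!: dvdE)
  then show "z \<in> range (mat_apply (1, 0, 0, p))"
    by (auto intro!: image_eqI[of _ _ "(u, y)"])
qed auto

lemma range_mat_apply_scalar: "range (mat_apply (p, 0, 0, p)) = {(u, v). p dvd u \<and> p dvd v}"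
proof (intro set_eqI iffI)
  fix z :: "int \<times> int" assume "z \<in> {(u, v). p dvd u \<and> p dvd v}"
  then obtain x y where "z = (p * x, p * y)" by (auto elim!: dvdE)
  then show "z \<in> range (mat_apply (p, 0, 0, p))"
    by (auto intro!: image_eqI[of _ _ "(x, y)"])
qed auto

lemma zero_mod_prime_cases:
  fixes p a b c u v :: int
  assumes p: "prime p" and zero: "p dvd form_eval (a, b, c) (u, v)"
  obtains "p dvd u" "p dvd v"
    | "p dvd a" "p dvd v"
    | t where "t \<in> {0..<p}" "p dvd form_eval (a, b, c) (t, 1)" "p dvd u - t * v"
proof (cases "p dvd v")
  case True
  have "form_eval (a, b, c) (u, v) = a * u\<^sup>2 + v * (b * u + c * v)"
    by (simp add: power2_eq_square algebra_simps)
  with zero True have "p dvd a * u\<^sup>2"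
    by (metis dvd_add_left_iff dvd_mult2)
  with p True that(1,2) show ?thesis
    by (auto simp: prime_dvd_mult_iff prime_dvd_power_iff)
next
  case False
  with p have "coprime v p"
    by (simp add: prime_imp_coprime ac_simps)
  then obtain w where w: "[v * w = 1] (mod p)"
    using cong_solve_coprime_int by blast
  define t where "t = (u * w) mod p"
  have "[t = u * w] (mod p)"
    by (simp add: t_def)
  then have "[t * v = u * (v * w)] (mod p)"
    by (metis cong_scalar_right mult.assoc mult.commute)
  also have "[u * (v * w) = u * 1] (mod p)"
    using w by (rule cong_scalar_left)
  finally have line: "p dvd u - t * v"
    by (simp add: cong_iff_dvd_diff dvd_diff_commute)
  have "form_eval (a, b, c) (t * v, v)
      = form_eval (a, b, c) (u, v) - (u - t * v) * (a * (u + t * v) + b * v)"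
    using form_eval_diff[of a b c u v "t * v"] by linarith
  then have "p dvd form_eval (a, b, c) (t * v, v)"
    by (simp only:) (rule dvd_diff[OF zero dvd_mult2[OF line]])
  then have "p dvd v\<^sup>2 * form_eval (a, b, c) (t, 1)"
    using form_eval_homogeneous[of "(a, b, c)" v t 1] by (simp add: ac_simps)
  then have "p dvd form_eval (a, b, c) (t, 1)"
    using p False by (simp add: prime_dvd_mult_iff prime_dvd_power_iff)
  moreover have "t \<in> {0..<p}"
    using p unfolding t_def by (simp add: prime_gt_0_int)
  ultimately show ?thesis using that(3) line by blast
qed

definition form_roots :: "int \<Rightarrow> form \<Rightarrow> int set" where
  "form_roots p F = {t \<in> {0..<p}. p dvd form_eval F (t, 1)}"

lemma finite_form_roots [simp]: "finite (form_roots p F)"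
  unfolding form_roots_def by (rule finite_subset[of _ "{0..<p}"]) auto

text \<open>One matrix for each zero of \<open>F\<close> on the projective line over \<open>\<int>/p\<close>: \<open>(t, p, 1, 0)\<close>
  for the point \<open>[t : 1]\<close>, and \<open>(1, 0, 0, p)\<close> for \<open>[1 : 0]\<close>, which is a zero iff \<open>p\<close> divides
  the leading coefficient.\<close>

definition form_root_mats :: "int \<Rightarrow> form \<Rightarrow> mat list" where
  "form_root_mats p F =
     (if p dvd fst F then [(1, 0, 0, p)] else []) @
     map (\<lambda>t. (t, p, 1, 0)) (sorted_list_of_set (form_roots p F))"

lemma residues_eq_if_dvd_diff:
  fixes p t1 t2 :: int
  assumes "t1 \<in> {0..<p}" "t2 \<in> {0..<p}" "p dvd t1 - t2"
  shows "t1 = t2"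
  using assms cong_less_imp_eq_int[of t1 p t2] by (simp add: cong_iff_dvd_diff)

lemma form_roots_sum_dvd:
  fixes p a b c :: int
  assumes p: "prime p" and roots: "t1 \<in> form_roots p (a, b, c)" "t2 \<in> form_roots p (a, b, c)"
    and "t1 \<noteq> t2"
  shows "p dvd a * (t1 + t2) + b"
proof -
  have "p dvd form_eval (a, b, c) (t1, 1) - form_eval (a, b, c) (t2, 1)"
    using roots by (simp add: form_roots_def dvd_diff del: form_eval.simps)
  then have "p dvd (t1 - t2) * (a * (t1 + t2) + b)"
    by (simp only: form_eval_diff mult_1_right)
  moreover have "\<not> p dvd t1 - t2"
    using roots \<open>t1 \<noteq> t2\<close> residues_eq_if_dvd_diff by (auto simp: form_roots_def)
  ultimately show ?thesis
    using p by (simp add: prime_dvd_mult_iff)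
qed

lemma card_form_roots_le:
  fixes p a b c :: int
  assumes p: "prime p" and nonzero: "\<not> (p dvd a \<and> p dvd b \<and> p dvd c)"
  shows "card (form_roots p (a, b, c)) \<le> (if p dvd a then 1 else 2)"
proof (cases "form_roots p (a, b, c) = {}")
  case False
  define R where "R = form_roots p (a, b, c)"
  from False obtain x where x: "x \<in> R" by (auto simp: R_def)
  have vieta: "p dvd a * (x + y) + b" if "y \<in> R - {x}" for y
    using form_roots_sum_dvd[OF p] x that by (auto simp: R_def)
  have "card (R - {x}) = 0" if "p dvd a"
  proof (rule ccontr)
    assume "card (R - {x}) \<noteq> 0"
    then obtain y where y: "y \<in> R - {x}" by (metis card.empty ex_in_conv)
    then have "p dvd b"
      using vieta \<open>p dvd a\<close> by (metis dvd_add_right_iff dvd_mult2)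
    moreover have "p dvd a * y\<^sup>2 + b * y + c"
      using y by (simp add: R_def form_roots_def)
    ultimately have "p dvd c"
      using \<open>p dvd a\<close> by (metis dvd_add_right_iff dvd_mult2)
    with nonzero \<open>p dvd a\<close> \<open>p dvd b\<close> show False by blast
  qed
  moreover have "card (R - {x}) \<le> 1" if "\<not> p dvd a"
  proof -
    have "y = z" if "y \<in> R - {x}" "z \<in> R - {x}" for y z
    proof -
      have "p dvd (a * (x + y) + b) - (a * (x + z) + b)"
        using vieta that by (intro dvd_diff)
      then have "p dvd a * (y - z)"
        by (simp add: algebra_simps)
      then have "p dvd y - z"
        using p \<open>\<not> p dvd a\<close> by (simp add: prime_dvd_mult_iff)
      with that show "y = z"
        using residues_eq_if_dvd_diff by (auto simp: R_def form_roots_def)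
    qed
    then show ?thesis
      by (simp add: card_le_Suc0_iff_eq R_def)
  qed
  moreover have "card R = Suc (card (R - {x}))"
    using finite_form_roots x unfolding R_def by (rule card_Suc_Diff1[symmetric])
  ultimately show ?thesis
    by (auto simp: R_def)
qed simp

lemma length_form_root_mats:
  fixes p a b c :: int
  assumes "prime p" and "\<not> (p dvd a \<and> p dvd b \<and> p dvd c)"
  shows "length (form_root_mats p (a, b, c)) \<le> 2"
  using card_form_roots_le[OF assms] by (simp add: form_root_mats_def split: if_splits)

lemma form_root_mats_divisible:
  assumes "p \<noteq> 0" and "M \<in> set (form_root_mats p F)"
  shows "mat_det M \<noteq> 0" and "\<exists>G. form_compose F M = form_scale p G"
proof -
  obtain a b c where F: "F = (a, b, c)" by (cases F)
  from assms(2) consider "p dvd a" "M = (1, 0, 0, p)"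
    | t where "t \<in> form_roots p F" "M = (t, p, 1, 0)"
    by (auto simp: form_root_mats_def F split: if_splits)
  then have "mat_det M \<noteq> 0 \<and> (\<exists>G. form_compose F M = form_scale p G)"
  proof cases
    case 1
    then obtain a' where "a = p * a'" by blast
    then have "form_compose F M = form_scale p (a', b, c * p)"
      by (simp add: F 1 power2_eq_square)
    with assms(1) 1 show ?thesis by auto
  next
    case (2 t)
    then obtain k where "form_eval F (t, 1) = p * k"
      by (auto simp: form_roots_def)
    then have "form_compose F M = form_scale p (k, 2 * a * t + b, a * p)"
      by (simp add: F 2 power2_eq_square algebra_simps)
    with assms(1) 2 show ?thesis by auto
  qed
  then show "mat_det M \<noteq> 0" and "\<exists>G. form_compose F M = form_scale p G"
    by blast+
qed

lemma range_scalar_subset_form_root_mats: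
  assumes "M \<in> set (form_root_mats p F)"
  shows "range (mat_apply (p, 0, 0, p)) \<subseteq> range (mat_apply M)"
  using assms
  by (auto simp: form_root_mats_def range_mat_apply_scalar range_mat_apply_root
      range_mat_apply_infinity split: if_splits)

lemma zeros_mod_prime_subset:
  assumes p: "prime p"
  shows "zeros_mod F p \<subseteq>
    range (mat_apply (p, 0, 0, p)) \<union> (\<Union>M\<in>set (form_root_mats p F). range (mat_apply M))"
proof
  obtain a b c where F: "F = (a, b, c)" by (cases F)
  fix z assume "z \<in> zeros_mod F p"
  then obtain u v where z: "z = (u, v)" and zero: "p dvd form_eval (a, b, c) (u, v)"
    by (cases z) (simp add: zeros_mod_def F)
  show "z \<in> range (mat_apply (p, 0, 0, p)) \<union> (\<Union>M\<in>set (form_root_mats p F). range (mat_apply M))"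
  proof (rule zero_mod_prime_cases[OF p zero])
    assume "p dvd u" "p dvd v"
    then show ?thesis
      by (simp add: z range_mat_apply_scalar)
  next
    assume "p dvd a" "p dvd v"
    then have "(1, 0, 0, p) \<in> set (form_root_mats p F)"
      and "z \<in> range (mat_apply (1, 0, 0, p))"
      by (simp_all add: form_root_mats_def F z range_mat_apply_infinity)
    then show ?thesis by blast
  next
    fix t assume "t \<in> {0..<p}" "p dvd form_eval (a, b, c) (t, 1)" "p dvd u - t * v"
    then have "t \<in> form_roots p F" and "z \<in> range (mat_apply (t, p, 1, 0))"
      by (simp_all add: form_roots_def F z range_mat_apply_root)
    then have "(t, p, 1, 0) \<in> set (form_root_mats p F)"
      and "z \<in> range (mat_apply (t, p, 1, 0))"
      by (simp_all add: form_root_mats_def)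
    then show ?thesis by blast
  qed
qed

lemma zeros_mod_prime_cover_nonzero:
  fixes p a b c :: int
  assumes p: "prime p" and nonzero: "\<not> (p dvd a \<and> p dvd b \<and> p dvd c)"
  defines "Ms \<equiv> if form_root_mats p (a, b, c) = [] then [(p, 0, 0, p)] else form_root_mats p (a, b, c)"
  shows "length Ms \<le> 2"
    and "\<And>M. M \<in> set Ms \<Longrightarrow> mat_det M \<noteq> 0 \<and> (\<exists>G. form_compose (a, b, c) M = form_scale p G)"
    and "zeros_mod (a, b, c) p \<subseteq> (\<Union>M\<in>set Ms. range (mat_apply M))"
proof -
  let ?Rs = "form_root_mats p (a, b, c)"
  have "p \<noteq> 0"
    using p by auto
  show "length Ms \<le> 2"
    using length_form_root_mats[OF p nonzero] by (simp add: Ms_def)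
  show "mat_det M \<noteq> 0 \<and> (\<exists>G. form_compose (a, b, c) M = form_scale p G)" if "M \<in> set Ms" for M
  proof (cases "?Rs = []")
    case True
    with that have "M = (p, 0, 0, p)"
      by (simp add: Ms_def)
    moreover have "form_compose (a, b, c) (p, 0, 0, p) = form_scale p (p * a, p * b, p * c)"
      by (simp add: power2_eq_square)
    ultimately show ?thesis
      using \<open>p \<noteq> 0\<close> by auto
  next
    case False
    with that have "M \<in> set ?Rs"
      by (simp add: Ms_def)
    then show ?thesis
      using form_root_mats_divisible[OF \<open>p \<noteq> 0\<close>] by blast
  qed
  show "zeros_mod (a, b, c) p \<subseteq> (\<Union>M\<in>set Ms. range (mat_apply M))"
  proof (cases "?Rs = []")
    case False
    then have hd: "hd ?Rs \<in> set ?Rs"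
      by (rule hd_in_set)
    have "range (mat_apply (p, 0, 0, p)) \<subseteq> (\<Union>M\<in>set ?Rs. range (mat_apply M))"
      using range_scalar_subset_form_root_mats[OF hd] UN_upper[OF hd] by (rule subset_trans)
    moreover have "Ms = ?Rs"
      using False by (simp add: Ms_def)
    ultimately show ?thesis
      using zeros_mod_prime_subset[OF p, of "(a, b, c)"] by (metis Un_absorb1)
  qed (use zeros_mod_prime_subset[OF p, of "(a, b, c)"] in \<open>simp add: Ms_def\<close>)
qed

lemma zeros_mod_prime_cover:
  assumes p: "prime p"
  obtains Ms where "length Ms \<le> 2"
    and "\<And>M. M \<in> set Ms \<Longrightarrow> mat_det M \<noteq> 0 \<and> (\<exists>G. form_compose F M = form_scale p G)"
    and "zeros_mod F p \<subseteq> (\<Union>M\<in>set Ms. range (mat_apply M))"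
proof -
  obtain a b c where F: "F = (a, b, c)" by (cases F)
  show thesis
  proof (cases "p dvd a \<and> p dvd b \<and> p dvd c")
    case True
    then have "\<exists>G. form_compose F (1, 0, 0, 1) = form_scale p G"
      by (auto simp: F elim!: dvdE)
    moreover have "range (mat_apply (1, 0, 0, 1)) = UNIV"
    proof -
      have "mat_apply (1, 0, 0, 1) z = z" for z
        by (cases z) simp
      then show ?thesis
        by (metis surj_def)
    qed
    ultimately show thesis
      by (intro that[of "[(1, 0, 0, 1)]"]) auto
  next
    case False
    show thesis
      using that zeros_mod_prime_cover_nonzero[OF p False] unfolding F by blast
  qed
qed

lemma zeros_mod_mult_eq_Union:
  assumes "p \<noteq> 0"
    and cover: "zeros_mod F p \<subseteq> (\<Union>M\<in>A. range (mat_apply M))"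
    and compose: "\<And>M. M \<in> A \<Longrightarrow> form_compose F M = form_scale p (G M)"
  shows "zeros_mod F (p * s) = (\<Union>M\<in>A. mat_apply M ` zeros_mod (G M) s)"
proof -
  have eval: "form_eval F (mat_apply M w) = p * form_eval (G M) w" if "M \<in> A" for M w
    using compose[OF that] by (metis form_eval_compose form_eval_scale)
  show ?thesis
  proof (intro equalityI subsetI)
    fix z assume z: "z \<in> zeros_mod F (p * s)"
    then have "z \<in> zeros_mod F p"
      by (auto simp: zeros_mod_def dvd_mult_left)
    with cover obtain M w where "M \<in> A" "z = mat_apply M w"
      by blast
    moreover have "s dvd form_eval (G M) w"
      using z eval[OF \<open>M \<in> A\<close>] \<open>p \<noteq> 0\<close> \<open>z = mat_apply M w\<close> by (simp add: zeros_mod_def)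
    ultimately show "z \<in> (\<Union>M\<in>A. mat_apply M ` zeros_mod (G M) s)"
      by (auto simp: zeros_mod_def)
  next
    fix z assume "z \<in> (\<Union>M\<in>A. mat_apply M ` zeros_mod (G M) s)"
    then obtain M w where "M \<in> A" "z = mat_apply M w" "s dvd form_eval (G M) w"
      by (auto simp: zeros_mod_def)
    then show "z \<in> zeros_mod F (p * s)"
      using eval by (simp add: zeros_mod_def)
  qed
qed

lemma bigOmega_1 [simp]: "bigOmega 1 = 0"
  by (simp add: bigOmega_def)

lemma bigOmega_prime_mult:
  assumes "prime p" "s \<noteq> 0"
  shows "bigOmega (p * s) = Suc (bigOmega s)"
proof -
  have "p \<noteq> 0"
    using assms(1) by auto
  with assms show ?thesis
    by (simp add: bigOmega_def prime_factorization_mult prime_factorization_prime)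
qed

lemma Union_mat_images_lattices:
  assumes "\<And>M. M \<in> set Ms \<Longrightarrow>
    mat_det M \<noteq> 0 \<and> length (Lss M) \<le> k \<and> (\<forall>L\<in>set (Lss M). int_lattice L)"
  shows "\<exists>Ls. length Ls \<le> length Ms * k \<and> (\<forall>L\<in>set Ls. int_lattice L) \<and>
    \<Union>(set Ls) = (\<Union>M\<in>set Ms. mat_apply M ` \<Union>(set (Lss M)))"
proof (intro exI conjI)
  let ?Ls = "concat (map (\<lambda>M. map ((`) (mat_apply M)) (Lss M)) Ms)"
  have "length ?Ls = (\<Sum>M\<leftarrow>Ms. length (Lss M))"
    by (simp add: length_concat o_def)
  also have "\<dots> \<le> (\<Sum>M\<leftarrow>Ms. k)"
    using assms by (intro sum_list_mono) blast
  finally show "length ?Ls \<le> length Ms * k"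
    by (simp add: sum_list_triv)
  show "\<forall>L\<in>set ?Ls. int_lattice L"
    using assms int_lattice_mat_image by auto
  show "\<Union>(set ?Ls) = (\<Union>M\<in>set Ms. mat_apply M ` \<Union>(set (Lss M)))"
    by auto
qed

lemma zeros_mod_Union_lattices:
  assumes "r \<ge> 1"
  shows "\<exists>Ls. length Ls \<le> 2 ^ bigOmega r \<and> (\<forall>L\<in>set Ls. int_lattice L) \<and>
    zeros_mod F (int r) = \<Union>(set Ls)"
  using assms
proof (induction r arbitrary: F rule: less_induct)
  case (less r)
  show ?case
  proof (cases "r = 1")
    case True
    then show ?thesis
      using int_lattice_UNIV by (intro exI[of _ "[UNIV]"]) (simp add: zeros_mod_def)
  next
    case False
    then obtain p where p: "prime p" "p dvd r"
      using prime_factor_nat by blast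
    define s where "s = r div p"
    have r: "r = p * s"
      using p(2) by (simp add: s_def)
    have "s \<ge> 1" "s < r"
      using less.prems p(1) r prime_gt_1_nat[OF p(1)] by (auto intro!: Nat.gr0I)
    have "prime (int p)"
      using p(1) by simp
    then obtain Ms where Ms: "length Ms \<le> 2"
      "\<And>M. M \<in> set Ms \<Longrightarrow> mat_det M \<noteq> 0 \<and> (\<exists>G. form_compose F M = form_scale (int p) G)"
      "zeros_mod F (int p) \<subseteq> (\<Union>M\<in>set Ms. range (mat_apply M))"
      by (rule zeros_mod_prime_cover[where F = F]) blast
    obtain G where G: "\<And>M. M \<in> set Ms \<Longrightarrow> form_compose F M = form_scale (int p) (G M)"
      using Ms(2) by metis
    obtain Lss where Lss: "\<And>H. length (Lss H) \<le> 2 ^ bigOmega s \<and>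
        (\<forall>L\<in>set (Lss H). int_lattice L) \<and> zeros_mod H (int s) = \<Union>(set (Lss H))"
      using less.IH[OF \<open>s < r\<close> \<open>s \<ge> 1\<close>] by metis
    have "zeros_mod F (int r) = (\<Union>M\<in>set Ms. mat_apply M ` zeros_mod (G M) (int s))"
      unfolding r of_nat_mult using p(1) Ms(3) G by (intro zeros_mod_mult_eq_Union) auto
    also have "\<dots> = (\<Union>M\<in>set Ms. mat_apply M ` \<Union>(set (Lss (G M))))"
      using Lss by simp
    finally have zeros: "zeros_mod F (int r) = \<dots>" .
    have "length Ms * 2 ^ bigOmega s \<le> 2 ^ bigOmega r"
      using Ms(1) r p(1) \<open>s \<ge> 1\<close> bigOmega_prime_mult by simp
    moreover have "\<exists>Ls. length Ls \<le> length Ms * 2 ^ bigOmega s \<and> (\<forall>L\<in>set Ls. int_lattice L) \<and>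
        \<Union>(set Ls) = (\<Union>M\<in>set Ms. mat_apply M ` \<Union>(set (Lss (G M))))"
      using Ms(2) Lss by (intro Union_mat_images_lattices) blast
    ultimately show ?thesis
      unfolding zeros by (metis order_trans)
  qed
qed

theorem lemma6:
  fixes a b c :: int and r :: nat
  assumes "r \<ge> 1"
  shows "\<exists>Ls :: (int \<times> int) set list.
           length Ls \<le> 2 ^ bigOmega r \<and>
           (\<forall>L\<in>set Ls. int_lattice L) \<and>
           (\<forall>u v :: int. [a * u\<^sup>2 + b * u * v + c * v\<^sup>2 = 0] (mod int r)
                \<longleftrightarrow> (u, v) \<in> \<Union> (set Ls))"
proof -
  have "[a * u\<^sup>2 + b * u * v + c * v\<^sup>2 = 0] (mod int r) \<longleftrightarrow> (u, v) \<in> zeros_mod (a, b, c) (int r)"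
    for u v
    by (simp add: zeros_mod_def cong_0_iff)
  then show ?thesis
    using zeros_mod_Union_lattices[OF assms, of "(a, b, c)"] by auto
qed

end
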